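(* Let $A$ be a commutative ring and $E$ an $A$-module. Then the trivial ring extension $A\propto E$ is locally stable if and only if $A$ is locally stable.
   Context: All rings are commutative with identity. The trivial ring extension $A\propto E$ is the set of pairs $(a,e)$, $a\in A$, $e\in E$, with componentwise addition and multiplication $(a,e)(b,f)=(ab,af+be)$. A ring $S$ has stable range 1 if whenever $aS+bS=S$ there is $y\in S$ with $a+by$ a unit. $S$ is locally stable if whenever $a,b\in S$ with $aS+bS=S$ there is $y\in S$ such that $S/(a+by)S$ has stable range 1. *)

theory Defs
  imports "HOL-Algebra.Module" "HOL-Algebra.QuotRing"
begin

definition stable_range_one :: "('a, 'm) ring_scheme \<Rightarrow> bool" where
  "stable_range_one S \<longleftrightarrow>
     (\<forall>a \<in> carrier S. \<forall>b \<in> carrier S.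
        (\<exists>x \<in> carrier S. \<exists>z \<in> carrier S. a \<otimes>\<^bsub>S\<^esub> x \<oplus>\<^bsub>S\<^esub> b \<otimes>\<^bsub>S\<^esub> z = \<one>\<^bsub>S\<^esub>)
        \<longrightarrow> (\<exists>y \<in> carrier S. a \<oplus>\<^bsub>S\<^esub> b \<otimes>\<^bsub>S\<^esub> y \<in> Units S))"

definition locally_stable :: "('a, 'm) ring_scheme \<Rightarrow> bool" where
  "locally_stable S \<longleftrightarrow>
     (\<forall>a \<in> carrier S. \<forall>b \<in> carrier S.
        (\<exists>x \<in> carrier S. \<exists>z \<in> carrier S. a \<otimes>\<^bsub>S\<^esub> x \<oplus>\<^bsub>S\<^esub> b \<otimes>\<^bsub>S\<^esub> z = \<one>\<^bsub>S\<^esub>)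
        \<longrightarrow> (\<exists>y \<in> carrier S. stable_range_one (S Quot (PIdl\<^bsub>S\<^esub> (a \<oplus>\<^bsub>S\<^esub> b \<otimes>\<^bsub>S\<^esub> y)))))"

definition triv_ext :: "('a, 'c) ring_scheme \<Rightarrow> ('a, 'b, 'd) module_scheme \<Rightarrow> ('a \<times> 'b) ring" where
  "triv_ext A E =
    \<lparr> carrier = carrier A \<times> carrier E,
      mult = (\<lambda>(a, e) (b, f). (a \<otimes>\<^bsub>A\<^esub> b, (a \<odot>\<^bsub>E\<^esub> f) \<oplus>\<^bsub>E\<^esub> (b \<odot>\<^bsub>E\<^esub> e))),
      one = (\<one>\<^bsub>A\<^esub>, \<zero>\<^bsub>E\<^esub>),
      zero = (\<zero>\<^bsub>A\<^esub>, \<zero>\<^bsub>E\<^esub>),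
      add = (\<lambda>(a, e) (b, f). (a \<oplus>\<^bsub>A\<^esub> b, e \<oplus>\<^bsub>E\<^esub> f)) \<rparr>"

end

theory Submission
  imports Defs
begin

text \<open>The projection \<open>A \<propto> E \<rightarrow> A\<close> is surjective and, because \<open>0 \<propto> E\<close> is a square-zero
  ideal, an element of \<open>A \<propto> E\<close> is a unit as soon as its image in \<open>A\<close> is. Hence two
  elements are comaximal in \<open>A \<propto> E\<close> iff their images are comaximal in \<open>A\<close>. Reading
  "\<open>S/rS\<close> has stable range one" inside \<open>S\<close> (a coset \<open>p + rS\<close> is a unit iff \<open>p\<close> and \<open>r\<close> are
  comaximal) turns local stability into a statement built from comaximality alone, and any
  surjective ring homomorphism reflecting comaximality preserves and reflects it.\<close>

definition comaximal :: "('a, 'm) ring_scheme \<Rightarrow> 'a \<Rightarrow> 'a \<Rightarrow> bool" where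
  "comaximal S a b \<longleftrightarrow>
     (\<exists>x \<in> carrier S. \<exists>z \<in> carrier S. a \<otimes>\<^bsub>S\<^esub> x \<oplus>\<^bsub>S\<^esub> b \<otimes>\<^bsub>S\<^esub> z = \<one>\<^bsub>S\<^esub>)"

text \<open>Stable range one of \<open>S/rS\<close>, stated in \<open>S\<close>.\<close>
definition stable_range_one_mod :: "('a, 'm) ring_scheme \<Rightarrow> 'a \<Rightarrow> bool" where
  "stable_range_one_mod S r \<longleftrightarrow>
     (\<forall>a \<in> carrier S. \<forall>b \<in> carrier S.
        (\<exists>x \<in> carrier S. \<exists>z \<in> carrier S. comaximal S (a \<otimes>\<^bsub>S\<^esub> x \<oplus>\<^bsub>S\<^esub> b \<otimes>\<^bsub>S\<^esub> z) r)
        \<longrightarrow> (\<exists>y \<in> carrier S. comaximal S (a \<oplus>\<^bsub>S\<^esub> b \<otimes>\<^bsub>S\<^esub> y) r))"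

lemma stable_range_one_iff_comaximal:
  "stable_range_one S \<longleftrightarrow>
     (\<forall>a \<in> carrier S. \<forall>b \<in> carrier S.
        comaximal S a b \<longrightarrow> (\<exists>y \<in> carrier S. a \<oplus>\<^bsub>S\<^esub> b \<otimes>\<^bsub>S\<^esub> y \<in> Units S))"
  unfolding stable_range_one_def comaximal_def ..

lemma (in comm_monoid) Units_iff_r_inv_ex:
  "x \<in> Units G \<longleftrightarrow> x \<in> carrier G \<and> (\<exists>y \<in> carrier G. x \<otimes> y = \<one>)"
  unfolding Units_def by (auto simp: m_comm)

lemma (in cring) comaximal_iff_Units:
  assumes "a \<in> carrier R" "b \<in> carrier R"
  shows "comaximal R a b \<longleftrightarrow> (\<exists>x \<in> carrier R. \<exists>z \<in> carrier R. a \<otimes> x \<oplus> b \<otimes> z \<in> Units R)"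
proof
  assume "comaximal R a b"
  then show "\<exists>x \<in> carrier R. \<exists>z \<in> carrier R. a \<otimes> x \<oplus> b \<otimes> z \<in> Units R"
    unfolding comaximal_def by force
next
  assume "\<exists>x \<in> carrier R. \<exists>z \<in> carrier R. a \<otimes> x \<oplus> b \<otimes> z \<in> Units R"
  then obtain x z u where xzu: "x \<in> carrier R" "z \<in> carrier R" "u \<in> carrier R"
    "(a \<otimes> x \<oplus> b \<otimes> z) \<otimes> u = \<one>"
    unfolding Units_iff_r_inv_ex by blast
  then have "a \<otimes> (x \<otimes> u) \<oplus> b \<otimes> (z \<otimes> u) = \<one>"
    using assms by (simp add: l_distr m_assoc)
  then show "comaximal R a b"
    unfolding comaximal_def using xzu by blast
qed

text \<open>Stable range one and local stability both have the shape
  \<open>\<forall>a b. C a b \<longrightarrow> (\<exists>y. P (a + b y))\<close>; such statements pass along a surjective ring homomorphism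
  that transports \<open>C\<close> and \<open>P\<close>.\<close>
lemma ring_hom_surj_transfer:
  assumes R: "ring R" and h: "h \<in> ring_hom R S" "h ` carrier R = carrier S"
    and C: "\<And>a b. a \<in> carrier R \<Longrightarrow> b \<in> carrier R \<Longrightarrow> C a b \<longleftrightarrow> D (h a) (h b)"
    and P: "\<And>p. p \<in> carrier R \<Longrightarrow> P p \<longleftrightarrow> Q (h p)"
  shows "(\<forall>a \<in> carrier R. \<forall>b \<in> carrier R. C a b \<longrightarrow> (\<exists>y \<in> carrier R. P (a \<oplus>\<^bsub>R\<^esub> b \<otimes>\<^bsub>R\<^esub> y)))
     \<longleftrightarrow> (\<forall>a \<in> carrier S. \<forall>b \<in> carrier S. D a b \<longrightarrow> (\<exists>y \<in> carrier S. Q (a \<oplus>\<^bsub>S\<^esub> b \<otimes>\<^bsub>S\<^esub> y)))"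
proof -
  have hPQ: "P (a \<oplus>\<^bsub>R\<^esub> b \<otimes>\<^bsub>R\<^esub> y) \<longleftrightarrow> Q (h a \<oplus>\<^bsub>S\<^esub> h b \<otimes>\<^bsub>S\<^esub> h y)"
    if "a \<in> carrier R" "b \<in> carrier R" "y \<in> carrier R" for a b y
    using that P[of "a \<oplus>\<^bsub>R\<^esub> b \<otimes>\<^bsub>R\<^esub> y"] h(1)
    by (simp add: ring_hom_add ring_hom_mult ring.ring_simprules(1,5)[OF R])
  show ?thesis
  proof
    assume H: "\<forall>a \<in> carrier R. \<forall>b \<in> carrier R. C a b \<longrightarrow> (\<exists>y \<in> carrier R. P (a \<oplus>\<^bsub>R\<^esub> b \<otimes>\<^bsub>R\<^esub> y))"
    show "\<forall>a \<in> carrier S. \<forall>b \<in> carrier S. D a b \<longrightarrow> (\<exists>y \<in> carrier S. Q (a \<oplus>\<^bsub>S\<^esub> b \<otimes>\<^bsub>S\<^esub> y))"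
    proof (intro ballI impI)
      fix a b assume "a \<in> carrier S" "b \<in> carrier S" "D a b"
      then obtain a' b' where "a' \<in> carrier R" "b' \<in> carrier R" "a = h a'" "b = h b'" "C a' b'"
        using h(2) C by (metis imageE)
      with H hPQ show "\<exists>y \<in> carrier S. Q (a \<oplus>\<^bsub>S\<^esub> b \<otimes>\<^bsub>S\<^esub> y)"
        using h(2) by blast
    qed
  next
    assume H: "\<forall>a \<in> carrier S. \<forall>b \<in> carrier S. D a b \<longrightarrow> (\<exists>y \<in> carrier S. Q (a \<oplus>\<^bsub>S\<^esub> b \<otimes>\<^bsub>S\<^esub> y))"
    show "\<forall>a \<in> carrier R. \<forall>b \<in> carrier R. C a b \<longrightarrow> (\<exists>y \<in> carrier R. P (a \<oplus>\<^bsub>R\<^esub> b \<otimes>\<^bsub>R\<^esub> y))"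
    proof (intro ballI impI)
      fix a b assume ab: "a \<in> carrier R" "b \<in> carrier R" "C a b"
      then obtain y where "y \<in> carrier S" "Q (h a \<oplus>\<^bsub>S\<^esub> h b \<otimes>\<^bsub>S\<^esub> y)"
        using H C h(2) by blast
      then obtain y' where "y' \<in> carrier R" "Q (h a \<oplus>\<^bsub>S\<^esub> h b \<otimes>\<^bsub>S\<^esub> h y')"
        using h(2) by (metis imageE)
      with ab hPQ show "\<exists>y \<in> carrier R. P (a \<oplus>\<^bsub>R\<^esub> b \<otimes>\<^bsub>R\<^esub> y)" by blast
    qed
  qed
qed

lemma ring_hom_surj_combination:
  assumes "ring R" "h \<in> ring_hom R S" "h ` carrier R = carrier S"
    and "a \<in> carrier R" "b \<in> carrier R"
  shows "(\<exists>x \<in> carrier R. \<exists>z \<in> carrier R. \<Phi> (h (a \<otimes>\<^bsub>R\<^esub> x \<oplus>\<^bsub>R\<^esub> b \<otimes>\<^bsub>R\<^esub> z)))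
     \<longleftrightarrow> (\<exists>x \<in> carrier S. \<exists>z \<in> carrier S. \<Phi> (h a \<otimes>\<^bsub>S\<^esub> x \<oplus>\<^bsub>S\<^esub> h b \<otimes>\<^bsub>S\<^esub> z))"
proof -
  have "h (a \<otimes>\<^bsub>R\<^esub> x \<oplus>\<^bsub>R\<^esub> b \<otimes>\<^bsub>R\<^esub> z) = h a \<otimes>\<^bsub>S\<^esub> h x \<oplus>\<^bsub>S\<^esub> h b \<otimes>\<^bsub>S\<^esub> h z"
    if "x \<in> carrier R" "z \<in> carrier R" for x z
    using assms that by (simp add: ring_hom_add ring_hom_mult ring.ring_simprules(1,5))
  then show ?thesis
    unfolding assms(3)[symmetric] by auto
qed

lemma (in ideal) carrier_Quot_eq_image: "carrier (R Quot I) = (+>) I ` carrier R"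
  by (auto simp: FactRing_def A_RCOSETS_defs a_r_coset_def)

lemma (in cring) minus_one_mem_PIdl_iff:
  assumes r: "r \<in> carrier R" and q: "q \<in> carrier R"
  shows "q \<ominus> \<one> \<in> PIdl r \<longleftrightarrow> (\<exists>z \<in> carrier R. q \<oplus> r \<otimes> z = \<one>)"
proof
  assume "q \<ominus> \<one> \<in> PIdl r"
  then obtain w where w: "w \<in> carrier R" "q \<ominus> \<one> = w \<otimes> r" unfolding cgenideal_def by blast
  then have "q \<oplus> r \<otimes> (\<ominus> w) = \<one>"
    using q r by (metis a_comm add.inv_solve_right m_comm minus_closed minus_eq one_closed r_minus)
  then show "\<exists>z \<in> carrier R. q \<oplus> r \<otimes> z = \<one>" using w by blast
next
  assume "\<exists>z \<in> carrier R. q \<oplus> r \<otimes> z = \<one>"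
  then obtain z where z: "z \<in> carrier R" "q \<oplus> r \<otimes> z = \<one>" by blast
  then have "q \<ominus> \<one> = (\<ominus> z) \<otimes> r"
    using q r by (metis m_comm local.minus_add minus_eq l_minus r_neg2 m_closed a_inv_closed)
  then show "q \<ominus> \<one> \<in> PIdl r" unfolding cgenideal_def using z by blast
qed

lemma (in cring) Units_Quot_PIdl_iff:
  assumes r: "r \<in> carrier R" and p: "p \<in> carrier R"
  shows "PIdl r +> p \<in> Units (R Quot PIdl r) \<longleftrightarrow> comaximal R p r"
proof -
  interpret I: ideal "PIdl r" R using r by (rule cgenideal_ideal)
  interpret Q: cring "R Quot PIdl r" by (rule I.quotient_is_cring) (rule is_cring)
  have hom: "(+>) (PIdl r) \<in> ring_hom R (R Quot PIdl r)" by (rule I.rcos_ring_hom)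
  have "PIdl r +> p \<in> Units (R Quot PIdl r) \<longleftrightarrow>
      (\<exists>u \<in> carrier R. (PIdl r +> p) \<otimes>\<^bsub>R Quot PIdl r\<^esub> (PIdl r +> u) = \<one>\<^bsub>R Quot PIdl r\<^esub>)"
    using ring_hom_closed[OF hom p] unfolding Q.Units_iff_r_inv_ex I.carrier_Quot_eq_image by blast
  also have "\<dots> \<longleftrightarrow> (\<exists>u \<in> carrier R. PIdl r +> (p \<otimes> u) = PIdl r +> \<one>)"
    using p by (intro bex_cong refl) (simp add: ring_hom_mult[OF hom, symmetric] ring_hom_one[OF hom, symmetric])
  also have "\<dots> \<longleftrightarrow> (\<exists>u \<in> carrier R. p \<otimes> u \<ominus> \<one> \<in> PIdl r)"
    using p by (intro bex_cong refl) (simp add: quotient_eq_iff_same_a_r_cos[OF I.is_ideal])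
  also have "\<dots> \<longleftrightarrow> comaximal R p r"
    unfolding comaximal_def using p by (simp add: minus_one_mem_PIdl_iff[OF r])
  finally show ?thesis .
qed

lemma (in cring) stable_range_one_Quot_PIdl_iff:
  assumes r: "r \<in> carrier R"
  shows "stable_range_one (R Quot PIdl r) \<longleftrightarrow> stable_range_one_mod R r"
proof -
  interpret I: ideal "PIdl r" R using r by (rule cgenideal_ideal)
  interpret Q: cring "R Quot PIdl r" by (rule I.quotient_is_cring) (rule is_cring)
  have hom: "(+>) (PIdl r) \<in> ring_hom R (R Quot PIdl r)" by (rule I.rcos_ring_hom)
  note surj = I.carrier_Quot_eq_image[symmetric]
  have comaximal_Quot: "(\<exists>x \<in> carrier R. \<exists>z \<in> carrier R. comaximal R (a \<otimes> x \<oplus> b \<otimes> z) r)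
      \<longleftrightarrow> comaximal (R Quot PIdl r) (PIdl r +> a) (PIdl r +> b)"
    if ab: "a \<in> carrier R" "b \<in> carrier R" for a b
  proof -
    have "(\<exists>x \<in> carrier R. \<exists>z \<in> carrier R. comaximal R (a \<otimes> x \<oplus> b \<otimes> z) r)
        \<longleftrightarrow> (\<exists>x \<in> carrier R. \<exists>z \<in> carrier R. PIdl r +> (a \<otimes> x \<oplus> b \<otimes> z) \<in> Units (R Quot PIdl r))"
      using ab r by (simp add: Units_Quot_PIdl_iff)
    also have "\<dots> \<longleftrightarrow> (\<exists>x \<in> carrier (R Quot PIdl r). \<exists>z \<in> carrier (R Quot PIdl r).
        (PIdl r +> a) \<otimes>\<^bsub>R Quot PIdl r\<^esub> x \<oplus>\<^bsub>R Quot PIdl r\<^esub> (PIdl r +> b) \<otimes>\<^bsub>R Quot PIdl r\<^esub> z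
          \<in> Units (R Quot PIdl r))"
      by (rule ring_hom_surj_combination[OF ring_axioms hom surj ab])
    also have "\<dots> \<longleftrightarrow> comaximal (R Quot PIdl r) (PIdl r +> a) (PIdl r +> b)"
      using ab by (simp add: Q.comaximal_iff_Units ring_hom_closed[OF hom])
    finally show ?thesis .
  qed
  show ?thesis
    unfolding stable_range_one_iff_comaximal stable_range_one_mod_def
  proof (rule sym, rule ring_hom_surj_transfer[OF ring_axioms hom surj])
    show "comaximal R p r \<longleftrightarrow> PIdl r +> p \<in> Units (R Quot PIdl r)" if "p \<in> carrier R" for p
      using r that by (rule Units_Quot_PIdl_iff[symmetric])
  qed (rule comaximal_Quot)
qed

lemma (in cring) locally_stable_iff_stable_range_one_mod:
  "locally_stable R \<longleftrightarrow>
     (\<forall>a \<in> carrier R. \<forall>b \<in> carrier R. comaximal R a b \<longrightarrow>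
        (\<exists>y \<in> carrier R. stable_range_one_mod R (a \<oplus> b \<otimes> y)))"
  unfolding locally_stable_def comaximal_def by (simp add: stable_range_one_Quot_PIdl_iff)

lemma stable_range_one_mod_transfer:
  assumes R: "ring R" and h: "h \<in> ring_hom R S" "h ` carrier R = carrier S"
    and comaximal_iff: "\<And>p q. p \<in> carrier R \<Longrightarrow> q \<in> carrier R \<Longrightarrow>
      comaximal R p q \<longleftrightarrow> comaximal S (h p) (h q)"
    and r: "r \<in> carrier R"
  shows "stable_range_one_mod R r \<longleftrightarrow> stable_range_one_mod S (h r)"
proof -
  have C: "(\<exists>x \<in> carrier R. \<exists>z \<in> carrier R. comaximal R (a \<otimes>\<^bsub>R\<^esub> x \<oplus>\<^bsub>R\<^esub> b \<otimes>\<^bsub>R\<^esub> z) r)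
      \<longleftrightarrow> (\<exists>x \<in> carrier S. \<exists>z \<in> carrier S. comaximal S (h a \<otimes>\<^bsub>S\<^esub> x \<oplus>\<^bsub>S\<^esub> h b \<otimes>\<^bsub>S\<^esub> z) (h r))"
    if ab: "a \<in> carrier R" "b \<in> carrier R" for a b
  proof -
    have "(\<exists>x \<in> carrier R. \<exists>z \<in> carrier R. comaximal R (a \<otimes>\<^bsub>R\<^esub> x \<oplus>\<^bsub>R\<^esub> b \<otimes>\<^bsub>R\<^esub> z) r)
        \<longleftrightarrow> (\<exists>x \<in> carrier R. \<exists>z \<in> carrier R. comaximal S (h (a \<otimes>\<^bsub>R\<^esub> x \<oplus>\<^bsub>R\<^esub> b \<otimes>\<^bsub>R\<^esub> z)) (h r))"
      using ab r by (simp add: comaximal_iff ring.ring_simprules(1,5)[OF R])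
    also have "\<dots> \<longleftrightarrow> (\<exists>x \<in> carrier S. \<exists>z \<in> carrier S. comaximal S (h a \<otimes>\<^bsub>S\<^esub> x \<oplus>\<^bsub>S\<^esub> h b \<otimes>\<^bsub>S\<^esub> z) (h r))"
      by (rule ring_hom_surj_combination[OF R h ab])
    finally show ?thesis .
  qed
  show ?thesis
    unfolding stable_range_one_mod_def
  proof (rule ring_hom_surj_transfer[OF R h])
    show "comaximal R p r \<longleftrightarrow> comaximal S (h p) (h r)" if "p \<in> carrier R" for p
      using that r by (rule comaximal_iff)
  qed (rule C)
qed

lemma locally_stable_transfer:
  assumes R: "cring R" and S: "cring S" and h: "h \<in> ring_hom R S" "h ` carrier R = carrier S"
    and comaximal_iff: "\<And>p q. p \<in> carrier R \<Longrightarrow> q \<in> carrier R \<Longrightarrow>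
      comaximal R p q \<longleftrightarrow> comaximal S (h p) (h q)"
  shows "locally_stable R \<longleftrightarrow> locally_stable S"
  unfolding cring.locally_stable_iff_stable_range_one_mod[OF R] cring.locally_stable_iff_stable_range_one_mod[OF S]
proof (rule ring_hom_surj_transfer[OF cring.axioms(1)[OF R] h])
  show "comaximal R a b \<longleftrightarrow> comaximal S (h a) (h b)" if "a \<in> carrier R" "b \<in> carrier R" for a b
    using that by (rule comaximal_iff)
  show "stable_range_one_mod R p \<longleftrightarrow> stable_range_one_mod S (h p)" if "p \<in> carrier R" for p
    using cring.axioms(1)[OF R] h comaximal_iff that by (rule stable_range_one_mod_transfer)
qed

lemma triv_ext_simps:
  "carrier (triv_ext A E) = carrier A \<times> carrier E"
  "(a, e) \<otimes>\<^bsub>triv_ext A E\<^esub> (b, f) = (a \<otimes>\<^bsub>A\<^esub> b, (a \<odot>\<^bsub>E\<^esub> f) \<oplus>\<^bsub>E\<^esub> (b \<odot>\<^bsub>E\<^esub> e))"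
  "(a, e) \<oplus>\<^bsub>triv_ext A E\<^esub> (b, f) = (a \<oplus>\<^bsub>A\<^esub> b, e \<oplus>\<^bsub>E\<^esub> f)"
  "\<one>\<^bsub>triv_ext A E\<^esub> = (\<one>\<^bsub>A\<^esub>, \<zero>\<^bsub>E\<^esub>)"
  "\<zero>\<^bsub>triv_ext A E\<^esub> = (\<zero>\<^bsub>A\<^esub>, \<zero>\<^bsub>E\<^esub>)"
  by (simp_all add: triv_ext_def)

lemma (in module) smult_left_commute:
  "a \<in> carrier R \<Longrightarrow> b \<in> carrier R \<Longrightarrow> x \<in> carrier M \<Longrightarrow>
   a \<odot>\<^bsub>M\<^esub> (b \<odot>\<^bsub>M\<^esub> x) = b \<odot>\<^bsub>M\<^esub> (a \<odot>\<^bsub>M\<^esub> x)"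
  by (metis smult_assoc1 R.m_comm)

lemma triv_ext_cring:
  assumes "module A E"
  shows "cring (triv_ext A E)"
proof -
  interpret module A E by fact
  note S = triv_ext_simps
  show ?thesis
  proof (rule cringI)
    show "abelian_group (triv_ext A E)"
    proof (rule abelian_groupI, goal_cases)
      case 1 then show ?case by (auto simp: S)
    next
      case 2 then show ?case by (auto simp: S)
    next
      case 3 then show ?case by (auto simp: S R.a_assoc M.a_assoc)
    next
      case 4 then show ?case by (auto simp: S R.a_comm M.a_comm)
    next
      case 5 then show ?case by (auto simp: S)
    next
      case (6 x) then show ?case
        by (cases x) (auto simp: S intro!: bexI[of _ "(\<ominus>\<^bsub>A\<^esub> fst x, \<ominus>\<^bsub>E\<^esub> snd x)"])
    qed
  next
    show "comm_monoid (triv_ext A E)"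
    proof (rule comm_monoidI, goal_cases)
      case 1 then show ?case by (auto simp: S)
    next
      case 2 then show ?case by (auto simp: S)
    next
      case (3 x y z) then show ?case
        by (cases x; cases y; cases z)
          (auto simp: S R.m_assoc smult_r_distr smult_assoc1 M.a_ac smult_left_commute)
    next
      case (4 x) then show ?case by (cases x) (auto simp: S)
    next
      case (5 x y) then show ?case
        by (cases x; cases y) (auto simp: S R.m_comm M.a_comm)
    qed
  next
    fix x y z assume "x \<in> carrier (triv_ext A E)" "y \<in> carrier (triv_ext A E)" "z \<in> carrier (triv_ext A E)"
    then show "(x \<oplus>\<^bsub>triv_ext A E\<^esub> y) \<otimes>\<^bsub>triv_ext A E\<^esub> z = x \<otimes>\<^bsub>triv_ext A E\<^esub> z \<oplus>\<^bsub>triv_ext A E\<^esub> y \<otimes>\<^bsub>triv_ext A E\<^esub> z"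
      by (cases x; cases y; cases z)
         (auto simp: S R.l_distr smult_r_distr smult_l_distr M.a_ac)
  qed
qed

lemma fst_triv_ext:
  "fst (P \<otimes>\<^bsub>triv_ext A E\<^esub> Q) = fst P \<otimes>\<^bsub>A\<^esub> fst Q"
  "fst (P \<oplus>\<^bsub>triv_ext A E\<^esub> Q) = fst P \<oplus>\<^bsub>A\<^esub> fst Q"
  "fst \<one>\<^bsub>triv_ext A E\<^esub> = \<one>\<^bsub>A\<^esub>"
  by (simp_all add: triv_ext_def split_beta)

lemma fst_ring_hom_triv_ext: "fst \<in> ring_hom (triv_ext A E) A"
  by (rule ring_hom_memI) (auto simp: triv_ext_simps fst_triv_ext)

lemma fst_image_triv_ext:
  assumes "module A E"
  shows "fst ` carrier (triv_ext A E) = carrier A"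
proof -
  interpret module A E by fact
  show ?thesis by (force simp: triv_ext_simps)
qed

text \<open>The ideal \<open>0 \<propto> E\<close> squares to zero, so units lift:
  \<open>(p, e)\<^sup>-\<^sup>1 = (p\<^sup>-\<^sup>1, - p\<^sup>-\<^sup>2 e)\<close>.\<close>
lemma triv_ext_Units:
  assumes "module A E" and P: "P \<in> carrier (triv_ext A E)" "fst P \<in> Units A"
  shows "P \<in> Units (triv_ext A E)"
proof -
  interpret module A E by fact
  interpret T: cring "triv_ext A E" using assms(1) by (rule triv_ext_cring)
  obtain p e where Pe: "P = (p, e)" "p \<in> Units A" "e \<in> carrier E"
    using P by (cases P) (auto simp: triv_ext_simps)
  define q where "q = inv\<^bsub>A\<^esub> p"
  have q: "q \<in> carrier A" "p \<otimes>\<^bsub>A\<^esub> q = \<one>\<^bsub>A\<^esub>" and p: "p \<in> carrier A"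
    using Pe(2) by (auto simp: q_def)
  have "p \<odot>\<^bsub>E\<^esub> (q \<odot>\<^bsub>E\<^esub> (q \<odot>\<^bsub>E\<^esub> e)) = (p \<otimes>\<^bsub>A\<^esub> q) \<odot>\<^bsub>E\<^esub> (q \<odot>\<^bsub>E\<^esub> e)"
    using p q Pe(3) by (intro smult_assoc1[symmetric] smult_closed)
  also have "\<dots> = q \<odot>\<^bsub>E\<^esub> e"
    using q Pe(3) by simp
  finally have "P \<otimes>\<^bsub>triv_ext A E\<^esub> (q, \<ominus>\<^bsub>E\<^esub> (q \<odot>\<^bsub>E\<^esub> (q \<odot>\<^bsub>E\<^esub> e))) = \<one>\<^bsub>triv_ext A E\<^esub>"
    using p q Pe by (simp add: triv_ext_simps smult_r_minus M.l_neg)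
  moreover have "(q, \<ominus>\<^bsub>E\<^esub> (q \<odot>\<^bsub>E\<^esub> (q \<odot>\<^bsub>E\<^esub> e))) \<in> carrier (triv_ext A E)"
    using q Pe(3) by (simp add: triv_ext_simps)
  ultimately show ?thesis
    using P(1) unfolding T.Units_iff_r_inv_ex by blast
qed

lemma comaximal_triv_ext_iff:
  assumes "module A E" and pq: "p \<in> carrier (triv_ext A E)" "q \<in> carrier (triv_ext A E)"
  shows "comaximal (triv_ext A E) p q \<longleftrightarrow> comaximal A (fst p) (fst q)"
proof -
  interpret module A E by fact
  interpret T: cring "triv_ext A E" using assms(1) by (rule triv_ext_cring)
  show ?thesis
  proof
    assume "comaximal (triv_ext A E) p q"
    then obtain x z where xz: "x \<in> carrier (triv_ext A E)" "z \<in> carrier (triv_ext A E)"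
      "p \<otimes>\<^bsub>triv_ext A E\<^esub> x \<oplus>\<^bsub>triv_ext A E\<^esub> q \<otimes>\<^bsub>triv_ext A E\<^esub> z = \<one>\<^bsub>triv_ext A E\<^esub>"
      unfolding comaximal_def by blast
    from arg_cong[where f = fst, OF xz(3)]
    have "fst p \<otimes>\<^bsub>A\<^esub> fst x \<oplus>\<^bsub>A\<^esub> fst q \<otimes>\<^bsub>A\<^esub> fst z = \<one>\<^bsub>A\<^esub>"
      by (simp add: fst_triv_ext)
    then show "comaximal A (fst p) (fst q)"
      unfolding comaximal_def using xz(1,2) ring_hom_closed[OF fst_ring_hom_triv_ext] by blast
  next
    assume "comaximal A (fst p) (fst q)"
    then obtain x z where xz: "x \<in> carrier A" "z \<in> carrier A"
      "fst p \<otimes>\<^bsub>A\<^esub> x \<oplus>\<^bsub>A\<^esub> fst q \<otimes>\<^bsub>A\<^esub> z = \<one>\<^bsub>A\<^esub>"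
      unfolding comaximal_def by blast
    define c where "c = p \<otimes>\<^bsub>triv_ext A E\<^esub> (x, \<zero>\<^bsub>E\<^esub>) \<oplus>\<^bsub>triv_ext A E\<^esub> q \<otimes>\<^bsub>triv_ext A E\<^esub> (z, \<zero>\<^bsub>E\<^esub>)"
    have lifts: "(x, \<zero>\<^bsub>E\<^esub>) \<in> carrier (triv_ext A E)" "(z, \<zero>\<^bsub>E\<^esub>) \<in> carrier (triv_ext A E)"
      using xz by (simp_all add: triv_ext_simps)
    have "fst c = \<one>\<^bsub>A\<^esub>"
      using xz by (simp add: c_def fst_triv_ext)
    then have "c \<in> Units (triv_ext A E)"
      using triv_ext_Units[OF assms(1)] pq lifts by (simp add: c_def)
    then show "comaximal (triv_ext A E) p q"
      using T.comaximal_iff_Units[OF pq] lifts unfolding c_def by blast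
  qed
qed

theorem lemma3p11:
  fixes A :: "('a, 'c) ring_scheme" and E :: "('a, 'b, 'd) module_scheme"
  assumes "cring A" and "module A E"
  shows "locally_stable (triv_ext A E) \<longleftrightarrow> locally_stable A"
  using triv_ext_cring[OF assms(2)] assms(1) fst_ring_hom_triv_ext fst_image_triv_ext[OF assms(2)]
    comaximal_triv_ext_iff[OF assms(2)]
  by (rule locally_stable_transfer)

end
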